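(* Let $M=M_n\to\infty$ as $n\to\infty$. Assume that (i) $\psi(p_1,\dots,p_r)=\sum_{j=1}^r w_j\varphi(p_j)$ with weights $w_j>0$, where $\varphi$ is decreasing, non-negative on $(0,1/2)$, and one-to-one from $(0,1)$ to $(-\infty,\infty)$; (ii) there exists $r_0\in\{1,\dots,r-1\}$ such that (a) $H_0^{(1)}\cap\dots\cap H_0^{(r_0)}$ holds, $(T_{n,1},\dots,T_{n,r_0})$ converges weakly to a random vector with a continuous distribution function, and $$\sup_{\mathbf{x}\in\mathbb{R}^{r_0}}|\Pr(T_{n,1}^{[1]}\le x_1,\dots,T_{n,r_0}^{[1]}\le x_{r_0}\mid\mathbf{X}_n)-\Pr(T_{n,1}\le x_1,\dots,T_{n,r_0}\le x_{r_0})|\to0\ \text{in probability};$$ (b) for every $j\in\{r_0+1,\dots,r\}$, $H_0^{(j)}$ does not hold and $\Pr(T_{n,j}^{[1]}\ge T_{n,j})\to0$. Then $W_{n,M_n}^{[0]}$ diverges to infinity in probability.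
   Context: Setting: Let $\mathbf{X}_n$ denote the available data. For $j\in\{1,\dots,r\}$, let $T_{n,j}=T_{n,j}(\mathbf{X}_n)$ be real-valued test statistics, large values of $T_{n,j}$ providing evidence against a null hypothesis $H_0^{(j)}$, and $\mathbf{T}_n=(T_{n,1},\dots,T_{n,r})$. Let $\mathbf{V}_n^{[1]},\mathbf{V}_n^{[2]},\dots$ be i.i.d. random vectors representing the additional randomness of a resampling mechanism (independent of the data) and $\mathbf{T}_n^{[i]}=(T_{n,1}^{[i]},\dots,T_{n,r}^{[i]})=\mathbf{T}_n^{[i]}(\mathbf{X}_n,\mathbf{V}_n^{[i]})$, $i\ge1$, bootstrap replicates of $\mathbf{T}_n$; $\mathbf{T}_n^{[0]}=\mathbf{T}_n$. For an integer $M$, $i\in\{0,\dots,M\}$, $j\in\{1,\dots,r\}$: $p_{n,M}(T_{n,j}^{[i]})=\frac{1}{M+1}\{\frac12+\sum_{k=1}^M\mathbf{1}(T_{n,j}^{[k]}\ge T_{n,j}^{[i]})\}$ and $W_{n,M}^{[i]}=\psi\{p_{n,M}(T_{n,1}^{[i]}),\dots,p_{n,M}(T_{n,r}^{[i]})\}$. *)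

theory Defs
  imports "HOL-Probability.Probability"
begin

definition boot_pval :: "nat \<Rightarrow> (nat \<Rightarrow> real) \<Rightarrow> real \<Rightarrow> real" where
  "boot_pval m tb t = (1 / (real m + 1)) * (1 / 2 + (\<Sum>k\<in>{1..m}. if tb k \<ge> t then 1 else 0))"

definition weak_conv_vec :: "(nat \<Rightarrow> (nat \<Rightarrow> real) measure) \<Rightarrow> (nat \<Rightarrow> real) measure \<Rightarrow> bool" where
  "weak_conv_vec mu L \<longleftrightarrow>
     (\<forall>f :: (nat \<Rightarrow> real) \<Rightarrow> real.
        continuous_on UNIV f \<longrightarrow> bounded (range f) \<longrightarrow> f \<in> borel_measurable L \<longrightarrow>
        (\<lambda>n. integral\<^sup>L (mu n) f) \<longlonglongrightarrow> integral\<^sup>L L f)"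

text \<open>Convergence in probability to 0 of D n (D n defined on the probability space P n),
  phrased with outer probabilities so that no measurability of D n is presupposed.\<close>
definition tends_to_zero_in_prob :: "(nat \<Rightarrow> 'x measure) \<Rightarrow> (nat \<Rightarrow> 'x \<Rightarrow> real) \<Rightarrow> bool" where
  "tends_to_zero_in_prob P D \<longleftrightarrow>
     (\<forall>\<epsilon>>0. \<exists>A. (\<forall>n. A n \<in> sets (P n) \<and> {x \<in> space (P n). \<bar>D n x\<bar> > \<epsilon>} \<subseteq> A n)
                 \<and> (\<lambda>n. measure (P n) (A n)) \<longlonglongrightarrow> 0)"

end

theory Submission
  imports Defs
begin

text \<open>Under an alternative the probability that a bootstrap replicate exceeds the statistic
  tends to 0, so Markov's inequality for the number of exceedances among the \<open>M\<close> replicates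
  drives the p-value below any \<open>\<beta> > 0\<close>, and the decreasing bijection \<open>\<phi>\<close> sends it to
  \<open>+\<infinity>\<close>. Under a null hypothesis the continuous limit cdf yields a point \<open>y\<close> such that,
  with probability close to 1, \<open>T\<^sub>j > y\<^sub>j\<close> while the bootstrap puts mass at least \<open>\<epsilon>/8\<close> on
  the orthant below \<open>y\<close>; the exceedance probability is then at most \<open>1 - \<epsilon>/8\<close>, and
  Hoeffding's inequality keeps the p-value below \<open>1 - \<epsilon>/16\<close> once \<open>M\<close> is large. The null
  terms of \<open>\<psi>\<close> are thus bounded below in probability, and the alternative terms exceed any
  bound.\<close>

section \<open>Products of probability spaces\<close>

lemma product_prob_space_power:
  assumes "prob_space Q"
  shows "product_prob_space (\<lambda>_. Q)"
  using assms by (simp add: product_prob_space_def product_prob_space_axioms_def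
      product_sigma_finite_def prob_space_imp_sigma_finite)

lemma integral_PiM_power_indicator_coordinate:
  assumes Q: "prob_space Q" and S: "S \<in> sets Q" and k: "k \<in> I"
  shows "(\<integral>vs. indicator S (vs k) \<partial>PiM I (\<lambda>_. Q)) = measure Q S"
proof -
  interpret product_prob_space "\<lambda>_. Q" I
    using Q by (rule product_prob_space_power)
  have "(\<integral>vs. indicator S (vs k) \<partial>PiM I (\<lambda>_. Q))
      = (\<integral>v. (indicator S v :: real) \<partial>distr (PiM I (\<lambda>_. Q)) Q (\<lambda>vs. vs k))"
    using k S by (intro integral_distr[symmetric]) (auto simp: measurable_component_singleton)
  also have "\<dots> = measure Q S"
    using k S by (simp add: PiM_component Int_absorb2)
  finally show ?thesis .
qed

lemma indep_vars_PiM_power_coordinates: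
  assumes Q: "prob_space Q" and I: "I \<noteq> {}"
  shows "prob_space.indep_vars (PiM I (\<lambda>_. Q)) (\<lambda>_. Q) (\<lambda>k vs. vs k) I"
proof -
  interpret product_prob_space "\<lambda>_. Q" I
    using Q by (rule product_prob_space_power)
  have "distr (PiM I (\<lambda>_. Q)) (PiM I (\<lambda>_. Q)) (\<lambda>vs. \<lambda>k\<in>I. vs k) = PiM I (\<lambda>_. Q)"
    by (subst distr_cong[where g = "\<lambda>vs. vs"]) (auto simp: space_PiM PiE_def extensional_restrict)
  also have "\<dots> = PiM I (\<lambda>k. distr (PiM I (\<lambda>_. Q)) Q (\<lambda>vs. vs k))"
    by (intro PiM_cong refl) (simp add: PiM_component)
  finally show ?thesis
    by (subst P.indep_vars_iff_distr_eq_PiM'[OF I]) auto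
qed

lemma PiM_power_count_Markov:
  assumes Q: "prob_space Q" and I: "finite I" and S: "S \<in> sets Q" and c: "0 < c"
  shows "measure (PiM I (\<lambda>_. Q)) {vs \<in> space (PiM I (\<lambda>_. Q)). c \<le> (\<Sum>k\<in>I. indicator S (vs k))}
    \<le> real (card I) * measure Q S / c"
proof -
  interpret product_prob_space "\<lambda>_. Q" I
    using Q by (rule product_prob_space_power)
  have int: "integrable (PiM I (\<lambda>_. Q)) (\<lambda>vs. indicator S (vs k) :: real)" if "k \<in> I" for k
    using that S by (intro P.integrable_const_bound[where B = 1]) auto
  have "measure (PiM I (\<lambda>_. Q)) {vs \<in> space (PiM I (\<lambda>_. Q)). c \<le> (\<Sum>k\<in>I. indicator S (vs k))}
      \<le> (\<integral>vs. (\<Sum>k\<in>I. indicator S (vs k)) \<partial>PiM I (\<lambda>_. Q)) / c"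
    using int c by (intro integral_Markov_inequality_measure) (auto intro!: sum_nonneg)
  also have "\<dots> = real (card I) * measure Q S / c"
    using int by (simp add: integral_PiM_power_indicator_coordinate[OF Q S])
  finally show ?thesis .
qed

lemma PiM_power_count_Hoeffding:
  assumes Q: "prob_space Q" and I: "finite I" "I \<noteq> {}" and S: "S \<in> sets Q" and e: "0 \<le> e"
  shows "measure (PiM I (\<lambda>_. Q))
      {vs \<in> space (PiM I (\<lambda>_. Q)). real (card I) * measure Q S + e \<le> (\<Sum>k\<in>I. indicator S (vs k))}
    \<le> exp (- 2 * e\<^sup>2 / real (card I))"
proof -
  interpret product_prob_space "\<lambda>_. Q" I
    using Q by (rule product_prob_space_power)
  interpret Hoeffding_ineq "PiM I (\<lambda>_. Q)" I "\<lambda>k vs. indicator S (vs k)" "\<lambda>_. 0" "\<lambda>_. 1"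
      "real (card I) * measure Q S"
  proof unfold_locales
    show "P.indep_vars (\<lambda>_. borel) (\<lambda>k vs. indicator S (vs k)) I"
      using S by (intro P.indep_vars_compose2[OF indep_vars_PiM_power_coordinates[OF Q I(2)]]) auto
    show "real (card I) * measure Q S \<equiv> \<Sum>k\<in>I. P.expectation (\<lambda>vs. indicator S (vs k))"
      using integral_PiM_power_indicator_coordinate[OF Q S, of _ I] by simp
    show "AE vs in PiM I (\<lambda>_. Q). indicator S (vs k) \<in> {0..1::real}" for k
      by (simp add: indicator_def)
  qed (rule I(1))
  have "(\<Sum>k\<in>I. (1 - 0 :: real)\<^sup>2) = real (card I)"
    by simp
  moreover have "real (card I) > 0"
    using I by (simp add: card_gt_0_iff)
  ultimately show ?thesis
    using Hoeffding_ineq_ge[OF e] by simp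
qed

lemma measure_pair_eq_integral_sections:
  assumes P: "prob_space P" and R: "prob_space R" and E: "E \<in> sets (P \<Otimes>\<^sub>M R)"
  shows "integrable P (\<lambda>x. measure R (Pair x -` E))"
    and "measure (P \<Otimes>\<^sub>M R) E = (\<integral>x. measure R (Pair x -` E) \<partial>P)"
proof -
  interpret P: prob_space P by fact
  interpret R: prob_space R by fact
  interpret PR: prob_space "P \<Otimes>\<^sub>M R" by (intro prob_space_pair P R)
  have meas: "(\<lambda>x. measure R (Pair x -` E)) \<in> borel_measurable P"
    unfolding R.emeasure_eq_measure[symmetric] measure_def
    using R.measurable_emeasure_Pair[OF E] by measurable
  then show int: "integrable P (\<lambda>x. measure R (Pair x -` E))"
    by (intro P.integrable_const_bound[where B = 1]) auto
  have "ennreal (measure (P \<Otimes>\<^sub>M R) E) = (\<integral>\<^sup>+x. ennreal (measure R (Pair x -` E)) \<partial>P)"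
    using R.emeasure_pair_measure_alt[OF E] by (simp add: PR.emeasure_eq_measure R.emeasure_eq_measure)
  also have "\<dots> = ennreal (\<integral>x. measure R (Pair x -` E) \<partial>P)"
    using int by (intro nn_integral_eq_integral) auto
  finally show "measure (P \<Otimes>\<^sub>M R) E = (\<integral>x. measure R (Pair x -` E) \<partial>P)"
    by (simp add: ennreal_inj)
qed

section \<open>Bootstrap p-values\<close>

lemma boot_pval_gt_iff_count:
  "c < boot_pval m tb t \<longleftrightarrow> c * (real m + 1) - 1/2 < (\<Sum>k\<in>{1..m}. if t \<le> tb k then 1 else 0)"
  unfolding boot_pval_def by (simp add: field_simps)

lemma boot_pval_in_unit_interval: "boot_pval m tb t \<in> {0<..<1}"
proof -
  have "(\<Sum>k\<in>{1..m}. if t \<le> tb k then 1 else 0 :: real) \<le> real m"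
    using sum_mono[of "{1..m}" "\<lambda>k. if t \<le> tb k then 1 else 0 :: real" "\<lambda>_. 1"] by simp
  moreover have "0 \<le> (\<Sum>k\<in>{1..m}. if t \<le> tb k then 1 else 0 :: real)"
    by (rule sum_nonneg) simp
  ultimately show ?thesis
    unfolding boot_pval_def by (simp add: field_simps)
qed

lemma boot_pval_gt_eq_count_gt:
  "{vs \<in> space (PiM {1..m} (\<lambda>_. Q)). c < boot_pval m (\<lambda>k. f (vs k)) t}
   = {vs \<in> space (PiM {1..m} (\<lambda>_. Q)).
       c * (real m + 1) - 1/2 < (\<Sum>k\<in>{1..m}. indicator {v \<in> space Q. t \<le> f v} (vs k))}"
proof -
  have "(\<Sum>k\<in>{1..m}. indicator {v \<in> space Q. t \<le> f v} (vs k)) = (\<Sum>k\<in>{1..m}. if t \<le> f (vs k) then 1 else 0 :: real)"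
    if "vs \<in> space (PiM {1..m} (\<lambda>_. Q))" for vs
    using that by (intro sum.cong refl) (auto simp: space_PiM indicator_def)
  then show ?thesis
    by (auto simp: boot_pval_gt_iff_count)
qed

lemma boot_pval_gt_Markov:
  assumes Q: "prob_space Q" and f: "f \<in> borel_measurable Q" and d: "0 < c * (real m + 1) - 1/2"
  shows "measure (PiM {1..m} (\<lambda>_. Q)) {vs \<in> space (PiM {1..m} (\<lambda>_. Q)). c < boot_pval m (\<lambda>k. f (vs k)) t}
    \<le> real m * measure Q {v \<in> space Q. t \<le> f v} / (c * (real m + 1) - 1/2)"
proof -
  interpret product_prob_space "\<lambda>_. Q" "{1..m}"
    using Q by (rule product_prob_space_power)
  have S: "{v \<in> space Q. t \<le> f v} \<in> sets Q"
    using f by measurable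
  have "measure (PiM {1..m} (\<lambda>_. Q)) {vs \<in> space (PiM {1..m} (\<lambda>_. Q)). c < boot_pval m (\<lambda>k. f (vs k)) t}
      \<le> measure (PiM {1..m} (\<lambda>_. Q)) {vs \<in> space (PiM {1..m} (\<lambda>_. Q)).
          c * (real m + 1) - 1/2 \<le> (\<Sum>k\<in>{1..m}. indicator {v \<in> space Q. t \<le> f v} (vs k))}"
    unfolding boot_pval_gt_eq_count_gt using S by (intro P.finite_measure_mono) auto
  also have "\<dots> \<le> real m * measure Q {v \<in> space Q. t \<le> f v} / (c * (real m + 1) - 1/2)"
    using PiM_power_count_Markov[OF Q _ S d, of "{1..m}"] by simp
  finally show ?thesis .
qed

lemma boot_pval_gt_Hoeffding:
  assumes Q: "prob_space Q" and f: "f \<in> borel_measurable Q" and m: "1 \<le> m"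
    and b: "measure Q {v \<in> space Q. t \<le> f v} \<le> b" and e: "0 \<le> c * (real m + 1) - 1/2 - real m * b"
  shows "measure (PiM {1..m} (\<lambda>_. Q)) {vs \<in> space (PiM {1..m} (\<lambda>_. Q)). c < boot_pval m (\<lambda>k. f (vs k)) t}
    \<le> exp (- 2 * (c * (real m + 1) - 1/2 - real m * b)\<^sup>2 / real m)"
proof -
  interpret product_prob_space "\<lambda>_. Q" "{1..m}"
    using Q by (rule product_prob_space_power)
  let ?q = "measure Q {v \<in> space Q. t \<le> f v}"
  let ?e = "c * (real m + 1) - 1/2 - real m * b"
  let ?e' = "c * (real m + 1) - 1/2 - real m * ?q"
  have S: "{v \<in> space Q. t \<le> f v} \<in> sets Q"
    using f by measurable
  have e': "?e \<le> ?e'"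
    using b by (simp add: mult_left_mono)
  then have "0 \<le> ?e'"
    using e by linarith
  have "measure (PiM {1..m} (\<lambda>_. Q)) {vs \<in> space (PiM {1..m} (\<lambda>_. Q)). c < boot_pval m (\<lambda>k. f (vs k)) t}
      \<le> measure (PiM {1..m} (\<lambda>_. Q)) {vs \<in> space (PiM {1..m} (\<lambda>_. Q)).
          real (card {1..m}) * ?q + ?e' \<le> (\<Sum>k\<in>{1..m}. indicator {v \<in> space Q. t \<le> f v} (vs k))}"
    unfolding boot_pval_gt_eq_count_gt using S by (intro P.finite_measure_mono) auto
  also have "\<dots> \<le> exp (- 2 * ?e'\<^sup>2 / real (card {1..m}))"
    using m \<open>0 \<le> ?e'\<close> by (intro PiM_power_count_Hoeffding[OF Q _ _ S]) auto
  also have "\<dots> \<le> exp (- 2 * ?e\<^sup>2 / real m)"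
    using e e' m by (simp add: divide_right_mono power_mono)
  finally show ?thesis .
qed

lemma borel_measurable_boot_pval:
  assumes T: "T \<in> borel_measurable P" and Tb: "(\<lambda>(x, v). Tb x v) \<in> borel_measurable (P \<Otimes>\<^sub>M Q)"
  shows "(\<lambda>(x, vs). boot_pval m (\<lambda>k. Tb x (vs k)) (T x)) \<in> borel_measurable (P \<Otimes>\<^sub>M PiM {1..m} (\<lambda>_. Q))"
proof -
  have "(\<lambda>(x, vs). Tb x (vs k)) \<in> borel_measurable (P \<Otimes>\<^sub>M PiM {1..m} (\<lambda>_. Q))" if "k \<in> {1..m}" for k
  proof -
    have "(\<lambda>(x, vs). (x, vs k)) \<in> measurable (P \<Otimes>\<^sub>M PiM {1..m} (\<lambda>_. Q)) (P \<Otimes>\<^sub>M Q)"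
      using that by measurable
    from measurable_comp[OF this Tb] show ?thesis
      by (simp add: comp_def case_prod_beta)
  qed
  then show ?thesis
    using T unfolding boot_pval_def case_prod_beta by measurable
qed

lemma sets_boot_pval_gt:
  assumes "T \<in> borel_measurable P" and "(\<lambda>(x, v). Tb x v) \<in> borel_measurable (P \<Otimes>\<^sub>M Q)"
  shows "{(x, vs) \<in> space (P \<Otimes>\<^sub>M PiM {1..m} (\<lambda>_. Q)). c < boot_pval m (\<lambda>k. Tb x (vs k)) (T x)}
    \<in> sets (P \<Otimes>\<^sub>M PiM {1..m} (\<lambda>_. Q))"
proof -
  have "{(x, vs) \<in> space (P \<Otimes>\<^sub>M PiM {1..m} (\<lambda>_. Q)). c < boot_pval m (\<lambda>k. Tb x (vs k)) (T x)}
    = {z \<in> space (P \<Otimes>\<^sub>M PiM {1..m} (\<lambda>_. Q)). c < (\<lambda>(x, vs). boot_pval m (\<lambda>k. Tb x (vs k)) (T x)) z}"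
    by auto
  also have "\<dots> \<in> sets (P \<Otimes>\<^sub>M PiM {1..m} (\<lambda>_. Q))"
    using borel_measurable_boot_pval[OF assms, of m] by measurable
  finally show ?thesis .
qed

lemma measure_boot_pval_gt_Markov:
  assumes P: "prob_space P" and Q: "prob_space Q" and T: "T \<in> borel_measurable P"
    and Tb: "(\<lambda>(x, v). Tb x v) \<in> borel_measurable (P \<Otimes>\<^sub>M Q)" and d: "0 < c * (real m + 1) - 1/2"
  shows "measure (P \<Otimes>\<^sub>M PiM {1..m} (\<lambda>_. Q))
      {(x, vs) \<in> space (P \<Otimes>\<^sub>M PiM {1..m} (\<lambda>_. Q)). c < boot_pval m (\<lambda>k. Tb x (vs k)) (T x)}
    \<le> real m / (c * (real m + 1) - 1/2) * measure (P \<Otimes>\<^sub>M Q) {(x, v) \<in> space (P \<Otimes>\<^sub>M Q). T x \<le> Tb x v}"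
    (is "measure _ ?E \<le> ?C * measure _ ?S")
proof -
  have R: "prob_space (PiM {1..m} (\<lambda>_. Q))"
    using Q by (intro prob_space_PiM)
  have E: "?E \<in> sets (P \<Otimes>\<^sub>M PiM {1..m} (\<lambda>_. Q))"
    by (rule sets_boot_pval_gt[OF T Tb])
  have "?S = {z \<in> space (P \<Otimes>\<^sub>M Q). T (fst z) \<le> (\<lambda>(x, v). Tb x v) z}"
    by auto
  also have "\<dots> \<in> sets (P \<Otimes>\<^sub>M Q)"
    using T Tb by measurable
  finally have S: "?S \<in> sets (P \<Otimes>\<^sub>M Q)" .
  have "measure (P \<Otimes>\<^sub>M PiM {1..m} (\<lambda>_. Q)) ?E = (\<integral>x. measure (PiM {1..m} (\<lambda>_. Q)) (Pair x -` ?E) \<partial>P)"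
    by (rule measure_pair_eq_integral_sections(2)[OF P R E])
  also have "\<dots> \<le> (\<integral>x. ?C * measure Q (Pair x -` ?S) \<partial>P)"
  proof (rule integral_mono)
    fix x assume x: "x \<in> space P"
    have "Pair x -` ?E = {vs \<in> space (PiM {1..m} (\<lambda>_. Q)). c < boot_pval m (\<lambda>k. Tb x (vs k)) (T x)}"
      "Pair x -` ?S = {v \<in> space Q. T x \<le> Tb x v}"
      using x by (auto simp: space_pair_measure)
    then show "measure (PiM {1..m} (\<lambda>_. Q)) (Pair x -` ?E) \<le> ?C * measure Q (Pair x -` ?S)"
      using boot_pval_gt_Markov[OF Q _ d, of "Tb x" "T x"] measurable_Pair2[OF Tb x] by simp
  qed (intro measure_pair_eq_integral_sections(1)[OF P R E] integrable_mult_right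
      measure_pair_eq_integral_sections(1)[OF P Q S])+
  also have "\<dots> = ?C * measure (P \<Otimes>\<^sub>M Q) ?S"
    by (simp add: measure_pair_eq_integral_sections(2)[OF P Q S])
  finally show ?thesis .
qed

lemma measure_boot_pval_gt_Hoeffding:
  assumes P: "prob_space P" and Q: "prob_space Q" and T: "T \<in> borel_measurable P"
    and Tb: "(\<lambda>(x, v). Tb x v) \<in> borel_measurable (P \<Otimes>\<^sub>M Q)"
    and B: "B \<in> sets P" and m: "1 \<le> m" and e: "0 \<le> c * (real m + 1) - 1/2 - real m * b"
    and b: "\<And>x. x \<in> space P \<Longrightarrow> x \<notin> B \<Longrightarrow> measure Q {v \<in> space Q. T x \<le> Tb x v} \<le> b"
  shows "measure (P \<Otimes>\<^sub>M PiM {1..m} (\<lambda>_. Q))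
      {(x, vs) \<in> space (P \<Otimes>\<^sub>M PiM {1..m} (\<lambda>_. Q)). c < boot_pval m (\<lambda>k. Tb x (vs k)) (T x)}
    \<le> measure P B + exp (- 2 * (c * (real m + 1) - 1/2 - real m * b)\<^sup>2 / real m)"
    (is "measure _ ?E \<le> measure P B + ?d")
proof -
  interpret P: prob_space P by fact
  have R: "prob_space (PiM {1..m} (\<lambda>_. Q))"
    using Q by (intro prob_space_PiM)
  interpret R: prob_space "PiM {1..m} (\<lambda>_. Q)" by fact
  have intB: "integrable P (indicator B :: _ \<Rightarrow> real)"
    using B by (simp add: P.emeasure_eq_measure)
  have E: "?E \<in> sets (P \<Otimes>\<^sub>M PiM {1..m} (\<lambda>_. Q))"
    by (rule sets_boot_pval_gt[OF T Tb])
  have "measure (P \<Otimes>\<^sub>M PiM {1..m} (\<lambda>_. Q)) ?E = (\<integral>x. measure (PiM {1..m} (\<lambda>_. Q)) (Pair x -` ?E) \<partial>P)"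
    by (rule measure_pair_eq_integral_sections(2)[OF P R E])
  also have "\<dots> \<le> (\<integral>x. indicator B x + ?d \<partial>P)"
  proof (rule integral_mono)
    fix x assume x: "x \<in> space P"
    have sec: "Pair x -` ?E = {vs \<in> space (PiM {1..m} (\<lambda>_. Q)). c < boot_pval m (\<lambda>k. Tb x (vs k)) (T x)}"
      using x by (auto simp: space_pair_measure)
    show "measure (PiM {1..m} (\<lambda>_. Q)) (Pair x -` ?E) \<le> indicator B x + ?d"
    proof (cases "x \<in> B")
      case True
      then show ?thesis
        by (intro order.trans[OF R.prob_le_1]) simp
    next
      case False
      then show ?thesis
        using boot_pval_gt_Hoeffding[OF Q _ m b[OF x False] e] measurable_Pair2[OF Tb x] sec by simp
    qed
  qed (use measure_pair_eq_integral_sections(1)[OF P R E] B intB in \<open>auto intro!: Bochner_Integration.integrable_add\<close>)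
  also have "\<dots> = measure P B + ?d"
    using B intB by (subst Bochner_Integration.integral_add) (auto simp: P.prob_space)
  finally show ?thesis .
qed

section \<open>Tests under an alternative\<close>

lemma boot_pval_alternative_tendsto_zero:
  assumes P: "\<And>n. prob_space (P n)" and Q: "\<And>n. prob_space (Q n)"
    and T: "\<And>n. T n \<in> borel_measurable (P n)"
    and Tb: "\<And>n. (\<lambda>(x, v). Tb n x v) \<in> borel_measurable (P n \<Otimes>\<^sub>M Q n)"
    and M: "filterlim Mn at_top sequentially"
    and alt: "(\<lambda>n. measure (P n \<Otimes>\<^sub>M Q n) {(x, v) \<in> space (P n \<Otimes>\<^sub>M Q n). T n x \<le> Tb n x v}) \<longlonglongrightarrow> 0"
    and \<beta>: "0 < \<beta>"
  shows "(\<lambda>n. measure (P n \<Otimes>\<^sub>M PiM {1..Mn n} (\<lambda>_. Q n))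
      {(x, vs) \<in> space (P n \<Otimes>\<^sub>M PiM {1..Mn n} (\<lambda>_. Q n)). \<beta> < boot_pval (Mn n) (\<lambda>k. Tb n x (vs k)) (T n x)})
    \<longlonglongrightarrow> 0"
proof (rule tendsto_sandwich[OF _ _ tendsto_const])
  let ?\<pi> = "\<lambda>n. measure (P n \<Otimes>\<^sub>M Q n) {(x, v) \<in> space (P n \<Otimes>\<^sub>M Q n). T n x \<le> Tb n x v}"
  have "filterlim (\<lambda>n. real (Mn n)) at_top sequentially"
    by (rule filterlim_compose[OF filterlim_real_sequentially M])
  then have "eventually (\<lambda>n. 1 / \<beta> \<le> real (Mn n)) sequentially"
    by (simp add: filterlim_at_top)
  then show "eventually (\<lambda>n. measure (P n \<Otimes>\<^sub>M PiM {1..Mn n} (\<lambda>_. Q n))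
      {(x, vs) \<in> space (P n \<Otimes>\<^sub>M PiM {1..Mn n} (\<lambda>_. Q n)). \<beta> < boot_pval (Mn n) (\<lambda>k. Tb n x (vs k)) (T n x)}
      \<le> 2 / \<beta> * ?\<pi> n) sequentially"
  proof (rule eventually_mono)
    fix n assume "1 / \<beta> \<le> real (Mn n)"
    then have m: "1 \<le> \<beta> * real (Mn n)"
      using \<beta> by (simp add: field_simps)
    then have d: "\<beta> * real (Mn n) / 2 \<le> \<beta> * (real (Mn n) + 1) - 1/2"
      using \<beta> by (simp add: algebra_simps)
    have "real (Mn n) / (\<beta> * (real (Mn n) + 1) - 1/2) \<le> real (Mn n) / (\<beta> * real (Mn n) / 2)"
      using d m by (intro divide_left_mono) auto
    also have "\<dots> = 2 / \<beta>"
      using m \<beta> by (cases "Mn n") (auto simp: field_simps)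
    finally have "real (Mn n) / (\<beta> * (real (Mn n) + 1) - 1/2) * ?\<pi> n \<le> 2 / \<beta> * ?\<pi> n"
      by (intro mult_right_mono) auto
    moreover have "0 < \<beta> * (real (Mn n) + 1) - 1/2"
      using d m by linarith
    ultimately show "measure (P n \<Otimes>\<^sub>M PiM {1..Mn n} (\<lambda>_. Q n))
      {(x, vs) \<in> space (P n \<Otimes>\<^sub>M PiM {1..Mn n} (\<lambda>_. Q n)). \<beta> < boot_pval (Mn n) (\<lambda>k. Tb n x (vs k)) (T n x)}
      \<le> 2 / \<beta> * ?\<pi> n"
      using measure_boot_pval_gt_Markov[OF P Q T Tb] by (meson order.trans)
  qed
  show "(\<lambda>n. 2 / \<beta> * ?\<pi> n) \<longlonglongrightarrow> 0"
    by (rule tendsto_mult_right_zero[OF alt])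
qed simp

section \<open>Weak convergence and orthant probabilities\<close>

definition ramp :: "real \<Rightarrow> real \<Rightarrow> real \<Rightarrow> real" where
  "ramp a h u = max 0 (min 1 ((a + h - u) / h))"

lemma ramp_bounds: "0 \<le> ramp a h u" "ramp a h u \<le> 1"
  by (auto simp: ramp_def)

lemma ramp_eq_1: "0 < h \<Longrightarrow> u \<le> a \<Longrightarrow> ramp a h u = 1"
  by (simp add: ramp_def field_simps)

lemma ramp_eq_0: "0 < h \<Longrightarrow> a + h \<le> u \<Longrightarrow> ramp a h u = 0"
  by (simp add: ramp_def field_simps max_def min_def)

lemma continuous_on_ramp: "continuous_on UNIV (ramp a h)"
  unfolding ramp_def divide_inverse by (intro continuous_intros)

lemma borel_measurable_ramp[measurable]: "ramp a h \<in> borel_measurable borel"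
  unfolding ramp_def by measurable

definition orthant_ramp :: "'i set \<Rightarrow> ('i \<Rightarrow> real) \<Rightarrow> real \<Rightarrow> ('i \<Rightarrow> real) \<Rightarrow> real" where
  "orthant_ramp J y h z = (\<Prod>k\<in>J. ramp (y k) h (z k))"

lemma orthant_ramp_bounds: "0 \<le> orthant_ramp J y h z" "orthant_ramp J y h z \<le> 1"
  unfolding orthant_ramp_def using ramp_bounds by (auto intro: prod_nonneg prod_le_1)

lemma abs_orthant_ramp_le_1: "\<bar>orthant_ramp J y h z\<bar> \<le> 1"
  using orthant_ramp_bounds[of J y h z] by simp

lemma orthant_ramp_eq_1: "0 < h \<Longrightarrow> \<forall>k\<in>J. z k \<le> y k \<Longrightarrow> orthant_ramp J y h z = 1"
  unfolding orthant_ramp_def by (simp add: ramp_eq_1)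

lemma orthant_ramp_eq_0:
  "0 < h \<Longrightarrow> finite J \<Longrightarrow> \<not> (\<forall>k\<in>J. z k \<le> y k + h) \<Longrightarrow> orthant_ramp J y h z = 0"
  unfolding orthant_ramp_def by (force simp: not_le intro!: prod_zero ramp_eq_0)

lemma continuous_on_orthant_ramp: "continuous_on UNIV (orthant_ramp J y h)"
  unfolding orthant_ramp_def
  by (intro continuous_on_prod continuous_on_compose2[OF continuous_on_ramp continuous_on_product_coordinates]) auto

lemma borel_measurable_orthant_ramp:
  "J \<subseteq> I \<Longrightarrow> orthant_ramp J y h \<in> borel_measurable (PiM I (\<lambda>_. borel))"
  unfolding orthant_ramp_def
  by (intro borel_measurable_prod measurable_compose[OF measurable_component_singleton, of _ _ "\<lambda>_. borel"]
      borel_measurable_ramp) auto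

lemma integral_orthant_ramp_bounds:
  assumes M: "prob_space M" and X: "X \<in> measurable M (PiM I (\<lambda>_. borel))"
    and J: "finite J" "J \<subseteq> I" and h: "0 < h"
  shows "measure M {x \<in> space M. \<forall>k\<in>J. X x k \<le> y k} \<le> (\<integral>x. orthant_ramp J y h (X x) \<partial>M)"
    and "(\<integral>x. orthant_ramp J y h (X x) \<partial>M) \<le> measure M {x \<in> space M. \<forall>k\<in>J. X x k \<le> y k + h}"
proof -
  interpret prob_space M by fact
  have sets: "{x \<in> space M. \<forall>k\<in>J. X x k \<le> c k} \<in> sets M" for c
    using J by (intro sets.sets_Collect_finite_All borel_measurable_le borel_measurable_const
        measurable_compose[OF X measurable_component_singleton]) auto
  have int: "integrable M (\<lambda>x. orthant_ramp J y h (X x))"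
    using J by (intro integrable_const_bound[where B = 1] measurable_compose[OF X borel_measurable_orthant_ramp])
      (auto simp: abs_orthant_ramp_le_1)
  have ind: "measure M {x \<in> space M. \<forall>k\<in>J. X x k \<le> c k} = (\<integral>x. indicator {x \<in> space M. \<forall>k\<in>J. X x k \<le> c k} x \<partial>M)" for c
    using sets[of c] by simp
  show "measure M {x \<in> space M. \<forall>k\<in>J. X x k \<le> y k} \<le> (\<integral>x. orthant_ramp J y h (X x) \<partial>M)"
    unfolding ind
  proof (rule integral_mono)
    show "indicator {x \<in> space M. \<forall>k\<in>J. X x k \<le> y k} x \<le> orthant_ramp J y h (X x)" for x
      using orthant_ramp_eq_1[OF h, of J "X x" y] orthant_ramp_bounds(1)[of J y h "X x"]
      by (auto simp: indicator_def)
  qed (use sets int in \<open>auto simp: emeasure_eq_measure\<close>)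
  show "(\<integral>x. orthant_ramp J y h (X x) \<partial>M) \<le> measure M {x \<in> space M. \<forall>k\<in>J. X x k \<le> y k + h}"
    unfolding ind
  proof (rule integral_mono)
    show "orthant_ramp J y h (X x) \<le> indicator {x \<in> space M. \<forall>k\<in>J. X x k \<le> y k + h} x"
      if "x \<in> space M" for x
      using that orthant_ramp_eq_0[OF h J(1), of "X x" y] orthant_ramp_bounds(2)[of J y h "X x"]
      by (force simp: indicator_def)
  qed (use sets int in \<open>auto simp: emeasure_eq_measure\<close>)
qed

lemma weak_conv_vec_integral_tendsto:
  fixes f :: "(nat \<Rightarrow> real) \<Rightarrow> real"
  assumes weak: "weak_conv_vec (\<lambda>n. distr (P n) (PiM I (\<lambda>_. borel)) (X n)) L"
    and L: "sets L = sets (PiM I (\<lambda>_. borel))" and X: "\<And>n. X n \<in> measurable (P n) (PiM I (\<lambda>_. borel))"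
    and f: "continuous_on UNIV f" "bounded (range f)" "f \<in> borel_measurable (PiM I (\<lambda>_. borel))"
  shows "(\<lambda>n. \<integral>x. f (X n x) \<partial>P n) \<longlonglongrightarrow> (\<integral>z. f z \<partial>L)"
proof -
  have "f \<in> borel_measurable L"
    by (subst measurable_cong_sets[OF L refl]) (rule f(3))
  from weak[unfolded weak_conv_vec_def, rule_format, OF f(1,2) this]
  show ?thesis
    by (simp only: integral_distr[OF X f(3)])
qed

lemma weak_conv_vec_orthant_ramp_tendsto:
  assumes weak: "weak_conv_vec (\<lambda>n. distr (P n) (PiM I (\<lambda>_. borel)) (X n)) L"
    and L: "sets L = sets (PiM I (\<lambda>_. borel))" and X: "\<And>n. X n \<in> measurable (P n) (PiM I (\<lambda>_. borel))"
    and J: "J \<subseteq> I"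
  shows "(\<lambda>n. \<integral>x. orthant_ramp J y h (X n x) \<partial>P n) \<longlonglongrightarrow> (\<integral>z. orthant_ramp J y h z \<partial>L)"
proof (rule weak_conv_vec_integral_tendsto[OF weak L X continuous_on_orthant_ramp])
  show "bounded (range (orthant_ramp J y h))"
    by (rule boundedI[where B = 1]) (auto simp: abs_orthant_ramp_le_1)
qed (rule borel_measurable_orthant_ramp[OF J])

lemma weak_conv_vec_orthant_lower:
  assumes weak: "weak_conv_vec (\<lambda>n. distr (P n) (PiM I (\<lambda>_. borel)) (X n)) L"
    and L: "prob_space L" "sets L = sets (PiM I (\<lambda>_. borel))"
    and P: "\<And>n. prob_space (P n)" and X: "\<And>n. X n \<in> measurable (P n) (PiM I (\<lambda>_. borel))"
    and J: "finite J" "J \<subseteq> I" and h: "0 < h"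
    and a: "a < measure L {z \<in> space L. \<forall>k\<in>J. z k \<le> y k}"
  shows "eventually (\<lambda>n. a < measure (P n) {x \<in> space (P n). \<forall>k\<in>J. X n x k \<le> y k + h}) sequentially"
proof -
  have "a < (\<integral>z. orthant_ramp J y h z \<partial>L)"
    using a integral_orthant_ramp_bounds(1)[OF L(1) measurable_ident_sets[OF L(2)] J h, where y = y]
    by simp
  then have "eventually (\<lambda>n. a < (\<integral>x. orthant_ramp J y h (X n x) \<partial>P n)) sequentially"
    by (rule order_tendstoD(1)[OF weak_conv_vec_orthant_ramp_tendsto[OF weak L(2) X J(2)]])
  then show ?thesis
  proof (rule eventually_mono)
    fix n assume "a < (\<integral>x. orthant_ramp J y h (X n x) \<partial>P n)"
    also have "\<dots> \<le> measure (P n) {x \<in> space (P n). \<forall>k\<in>J. X n x k \<le> y k + h}"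
      by (rule integral_orthant_ramp_bounds(2)[OF P X J h])
    finally show "a < measure (P n) {x \<in> space (P n). \<forall>k\<in>J. X n x k \<le> y k + h}" .
  qed
qed

lemma weak_conv_vec_orthant_upper:
  assumes weak: "weak_conv_vec (\<lambda>n. distr (P n) (PiM I (\<lambda>_. borel)) (X n)) L"
    and L: "prob_space L" "sets L = sets (PiM I (\<lambda>_. borel))"
    and P: "\<And>n. prob_space (P n)" and X: "\<And>n. X n \<in> measurable (P n) (PiM I (\<lambda>_. borel))"
    and J: "finite J" "J \<subseteq> I" and h: "0 < h"
    and b: "measure L {z \<in> space L. \<forall>k\<in>J. z k \<le> y k + h} < b"
  shows "eventually (\<lambda>n. measure (P n) {x \<in> space (P n). \<forall>k\<in>J. X n x k \<le> y k} < b) sequentially"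
proof -
  have "(\<integral>z. orthant_ramp J y h z \<partial>L) < b"
    using b integral_orthant_ramp_bounds(2)[OF L(1) measurable_ident_sets[OF L(2)] J h, where y = y]
    by simp
  then have "eventually (\<lambda>n. (\<integral>x. orthant_ramp J y h (X n x) \<partial>P n) < b) sequentially"
    by (rule order_tendstoD(2)[OF weak_conv_vec_orthant_ramp_tendsto[OF weak L(2) X J(2)]])
  then show ?thesis
  proof (rule eventually_mono)
    fix n assume "(\<integral>x. orthant_ramp J y h (X n x) \<partial>P n) < b"
    with integral_orthant_ramp_bounds(1)[OF P X J h]
    show "measure (P n) {x \<in> space (P n). \<forall>k\<in>J. X n x k \<le> y k} < b"
      by (rule le_less_trans)
  qed
qed

section \<open>Continuous multivariate distribution functions\<close>

lemma (in prob_space) cdf_distr_eq: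
  fixes f :: "'a \<Rightarrow> real"
  assumes "f \<in> borel_measurable M"
  shows "cdf (distr M borel f) = (\<lambda>t. measure M {x \<in> space M. f x \<le> t})"
proof
  fix t
  have "f -` {..t} \<inter> space M = {x \<in> space M. f x \<le> t}"
    by auto
  then show "cdf (distr M borel f) t = measure M {x \<in> space M. f x \<le> t}"
    using assms by (simp add: cdf_def2 measure_distr)
qed

lemma (in prob_space) measure_le_tendsto_zero_at_bot:
  fixes f :: "'a \<Rightarrow> real"
  assumes "f \<in> borel_measurable M"
  shows "((\<lambda>t. measure M {x \<in> space M. f x \<le> t}) \<longlongrightarrow> 0) at_bot"
proof -
  interpret D: real_distribution "distr M borel f"
    using assms by simp
  show ?thesis
    using D.cdf_lim_at_bot by (simp add: cdf_distr_eq[OF assms])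
qed

lemma (in prob_space) measure_gt_tendsto_zero_at_top:
  fixes f :: "'a \<Rightarrow> real"
  assumes f: "f \<in> borel_measurable M"
  shows "((\<lambda>t. measure M {x \<in> space M. t < f x}) \<longlongrightarrow> 0) at_top"
proof -
  have "measure M {x \<in> space M. t < f x} = 1 - measure M {x \<in> space M. f x \<le> t}" for t
  proof -
    have "{x \<in> space M. t < f x} = space M - {x \<in> space M. f x \<le> t}"
      by (auto simp: not_le)
    then show ?thesis
      using f by (simp add: prob_compl)
  qed
  moreover interpret D: real_distribution "distr M borel f"
    using f by simp
  have "((\<lambda>t. 1 - measure M {x \<in> space M. f x \<le> t}) \<longlongrightarrow> 1 - 1) at_top"
    using D.cdf_lim_at_top_prob by (intro tendsto_diff) (simp_all add: cdf_distr_eq[OF f])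
  ultimately show ?thesis
    by simp
qed

lemma (in prob_space) cdf_bracket:
  fixes f :: "'a \<Rightarrow> real"
  assumes f: "f \<in> borel_measurable M" and \<alpha>: "0 < \<alpha>" and \<beta>: "\<beta> < 1"
  shows "\<exists>t1 t2. t1 \<le> t2 \<and> measure M {x \<in> space M. f x \<le> t1} < \<alpha>
    \<and> \<beta> < measure M {x \<in> space M. f x \<le> t2}"
proof -
  from order_tendstoD(2)[OF measure_le_tendsto_zero_at_bot[OF f] \<alpha>]
  obtain t1 where t1: "measure M {x \<in> space M. f x \<le> t1} < \<alpha>"
    by (auto simp: eventually_at_bot_linorder)
  from order_tendstoD(2)[OF measure_gt_tendsto_zero_at_top[OF f], of "1 - \<beta>"] \<beta>
  obtain t2 where t2: "t1 \<le> t2" "measure M {x \<in> space M. t2 < f x} < 1 - \<beta>"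
    by (auto simp: eventually_at_top_linorder) (meson max.cobounded1 max.cobounded2)
  have "{x \<in> space M. t2 < f x} = space M - {x \<in> space M. f x \<le> t2}"
    by auto
  then have "measure M {x \<in> space M. t2 < f x} = 1 - measure M {x \<in> space M. f x \<le> t2}"
    using f by (simp add: prob_compl)
  with t1 t2 show ?thesis
    by (intro exI[of _ t1] exI[of _ t2]) auto
qed

lemma measurable_coordinate_of_sets_eq_PiM:
  "sets L = sets (PiM I (\<lambda>_. borel)) \<Longrightarrow> k \<in> I \<Longrightarrow> (\<lambda>z. z k) \<in> borel_measurable L"
  by (subst measurable_cong_sets[of L "PiM I (\<lambda>_. borel)"]) (auto intro: measurable_component_singleton)

lemma marginal_cdf_close_to_orthant_cdf:
  fixes L :: "('i \<Rightarrow> real) measure"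
  assumes L: "prob_space L" "sets L = sets (PiM I (\<lambda>_. borel))" and I: "finite I" "j \<in> I" and \<eta>: "0 < \<eta>"
  shows "\<exists>Y. \<forall>t. measure L {z \<in> space L. z j \<le> t}
    < measure L {z \<in> space L. \<forall>k\<in>I. z k \<le> (if k = j then t else Y)} + \<eta>"
proof -
  interpret L: prob_space L by fact
  note coord = measurable_coordinate_of_sets_eq_PiM[OF L(2)]
  have "((\<lambda>Y. \<Sum>k\<in>I. measure L {z \<in> space L. Y < z k}) \<longlongrightarrow> 0) at_top"
    by (intro tendsto_null_sum L.measure_gt_tendsto_zero_at_top coord)
  from order_tendstoD(2)[OF this \<eta>]
  obtain Y where Y: "(\<Sum>k\<in>I. measure L {z \<in> space L. Y < z k}) < \<eta>"
    by (auto simp: eventually_at_top_linorder)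
  have "measure L {z \<in> space L. z j \<le> t}
    < measure L {z \<in> space L. \<forall>k\<in>I. z k \<le> (if k = j then t else Y)} + \<eta>" for t
  proof -
    let ?G = "{z \<in> space L. \<forall>k\<in>I. z k \<le> (if k = j then t else Y)}"
    have sets: "?G \<in> sets L" "\<And>k. k \<in> I \<Longrightarrow> {z \<in> space L. Y < z k} \<in> sets L"
      using I coord by (intro sets.sets_Collect_finite_All, measurable)+
    then have union: "(\<Union>k\<in>I. {z \<in> space L. Y < z k}) \<in> sets L"
      using I by blast
    have "{z \<in> space L. z j \<le> t} \<subseteq> ?G \<union> (\<Union>k\<in>I. {z \<in> space L. Y < z k})"
      by (auto simp: not_le)
    then have "measure L {z \<in> space L. z j \<le> t} \<le> measure L (?G \<union> (\<Union>k\<in>I. {z \<in> space L. Y < z k}))"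
      using sets(1) union by (intro L.finite_measure_mono sets.Un)
    also have "\<dots> \<le> measure L ?G + measure L (\<Union>k\<in>I. {z \<in> space L. Y < z k})"
      using sets(1) union by (rule measure_Un_le)
    also have "\<dots> \<le> measure L ?G + (\<Sum>k\<in>I. measure L {z \<in> space L. Y < z k})"
      using sets(2) I by (simp add: L.finite_measure_subadditive_finite image_subset_iff)
    finally show ?thesis
      using Y by linarith
  qed
  then show ?thesis
    by blast
qed

lemma continuous_orthant_cdf_margin:
  fixes L :: "('i \<Rightarrow> real) measure"
  assumes L: "prob_space L" "sets L = sets (PiM I (\<lambda>_. borel))" and I: "finite I" "j \<in> I"
    and cont: "continuous_on UNIV (\<lambda>y. measure L {z \<in> space L. \<forall>k\<in>I. z k \<le> y k})"
    and \<epsilon>: "0 < \<epsilon>" "\<epsilon> \<le> 1"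
  shows "\<exists>y h. 0 < h \<and> \<epsilon> / 4 < measure L {z \<in> space L. \<forall>k\<in>I. z k \<le> y k}
    \<and> measure L {z \<in> space L. z j \<le> y j + h} < 3 * \<epsilon> / 4"
proof -
  interpret L: prob_space L by fact
  note coord = measurable_coordinate_of_sets_eq_PiM[OF L(2) I(2)]
  define H where "H t = measure L {z \<in> space L. z j \<le> t}" for t
  obtain Y where HG: "\<And>t. H t < measure L {z \<in> space L. \<forall>k\<in>I. z k \<le> (if k = j then t else Y)} + \<epsilon> / 8"
    using marginal_cdf_close_to_orthant_cdf[OF L I, of "\<epsilon> / 8"] \<epsilon> unfolding H_def by auto
  define G where "G t = measure L {z \<in> space L. \<forall>k\<in>I. z k \<le> (if k = j then t else Y)}" for t
  have GH: "G t \<le> H t" for t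
    unfolding G_def H_def using I coord by (intro L.finite_measure_mono) auto
  have "continuous_on UNIV (\<lambda>t. \<lambda>k. if k = j then t else Y)"
  proof (rule continuous_on_coordinatewise_then_product)
    show "continuous_on UNIV (\<lambda>t. if k = j then t else Y)" for k
      by (cases "k = j") (simp_all add: continuous_on_id)
  qed
  then have contG: "continuous_on UNIV G"
    unfolding G_def by (rule continuous_on_compose2[OF cont]) auto
  obtain t1 t2 where t2: "t1 \<le> t2" and t1: "H t1 < \<epsilon> / 2" and "5 / 8 < H t2"
    using L.cdf_bracket[OF coord, of "\<epsilon> / 2" "5 / 8"] \<epsilon> unfolding H_def by auto
  then have "\<epsilon> / 2 \<le> G t2"
    using HG[of t2] \<epsilon> unfolding G_def by linarith
  moreover have "G t1 \<le> \<epsilon> / 2"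
    using GH[of t1] t1 by linarith
  ultimately obtain s where s: "G s = \<epsilon> / 2"
    using IVT'[OF _ _ t2 continuous_on_subset[OF contG]] by blast
  obtain \<delta> where \<delta>: "0 < \<delta>" "\<And>t. dist t s < \<delta> \<Longrightarrow> dist (G t) (G s) < \<epsilon> / 8"
    using contG \<epsilon> unfolding continuous_on_iff by (metis UNIV_I zero_less_divide_iff zero_less_numeral)
  have "\<bar>G (s - \<delta> / 2) - \<epsilon> / 2\<bar> < \<epsilon> / 8" "\<bar>G (s + \<delta> / 2) - \<epsilon> / 2\<bar> < \<epsilon> / 8"
    using \<delta>(2)[of "s - \<delta> / 2"] \<delta>(2)[of "s + \<delta> / 2"] \<delta>(1) s by (simp_all add: dist_real_def)
  then have "\<epsilon> / 4 < G (s - \<delta> / 2)" "G (s + \<delta> / 2) < 5 * \<epsilon> / 8"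
    using \<epsilon> by (simp_all only: abs_less_iff) linarith+
  moreover have "H (s + \<delta> / 2) < 3 * \<epsilon> / 4"
    using HG[of "s + \<delta> / 2"] calculation(2) unfolding G_def by linarith
  ultimately show ?thesis
    using \<delta>(1) unfolding G_def H_def
    by (intro exI[of _ "\<lambda>k. if k = j then s - \<delta> / 2 else Y"] exI[of _ \<delta>]) (auto simp: field_simps)
qed

section \<open>Tests under the null hypothesis\<close>

lemma bootstrap_tail_le_of_cdf_close:
  fixes Tb :: "'i \<Rightarrow> 'v \<Rightarrow> real" and T :: "'i \<Rightarrow> 'x \<Rightarrow> real"
  assumes Q: "prob_space Q" and P: "prob_space P" and I: "finite I" "j \<in> I"
    and Tb: "\<And>k. k \<in> I \<Longrightarrow> Tb k \<in> borel_measurable Q"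
    and close: "\<bar>SUP y. \<bar>measure Q {v \<in> space Q. \<forall>k\<in>I. Tb k v \<le> y k}
                  - measure P {x \<in> space P. \<forall>k\<in>I. T k x \<le> y k}\<bar>\<bar> \<le> \<eta>"
    and y: "y j < t"
  shows "measure Q {v \<in> space Q. t \<le> Tb j v} \<le> 1 - measure P {x \<in> space P. \<forall>k\<in>I. T k x \<le> y k} + \<eta>"
proof -
  interpret Q: prob_space Q by fact
  interpret P: prob_space P by fact
  let ?D = "\<lambda>y. \<bar>measure Q {v \<in> space Q. \<forall>k\<in>I. Tb k v \<le> y k} - measure P {x \<in> space P. \<forall>k\<in>I. T k x \<le> y k}\<bar>"
  have "?D y \<le> (SUP y. ?D y)"
  proof (rule cSUP_upper)
    have "?D y' \<le> 1" for y'
      using Q.prob_le_1[of "{v \<in> space Q. \<forall>k\<in>I. Tb k v \<le> y' k}"] measure_nonneg[of Q "{v \<in> space Q. \<forall>k\<in>I. Tb k v \<le> y' k}"]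
        P.prob_le_1[of "{x \<in> space P. \<forall>k\<in>I. T k x \<le> y' k}"] measure_nonneg[of P "{x \<in> space P. \<forall>k\<in>I. T k x \<le> y' k}"]
      by linarith
    then show "bdd_above (range ?D)"
      by (intro bdd_aboveI[where M = 1]) auto
  qed simp
  also have "\<dots> \<le> \<eta>"
    using close by simp
  finally have "?D y \<le> \<eta>" .
  have sets: "{v \<in> space Q. \<forall>k\<in>I. Tb k v \<le> y k} \<in> sets Q"
    using I Tb by (intro sets.sets_Collect_finite_All) measurable
  have "{v \<in> space Q. t \<le> Tb j v} \<subseteq> space Q - {v \<in> space Q. \<forall>k\<in>I. Tb k v \<le> y k}"
    using I y by auto
  then have "measure Q {v \<in> space Q. t \<le> Tb j v} \<le> 1 - measure Q {v \<in> space Q. \<forall>k\<in>I. Tb k v \<le> y k}"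
    using sets by (simp add: Q.finite_measure_mono Q.prob_compl[symmetric])
  with \<open>?D y \<le> \<eta>\<close> show ?thesis
    by (simp add: abs_le_iff)
qed

lemma measure_boot_pval_null_le:
  fixes T :: "'i \<Rightarrow> 'x \<Rightarrow> real" and Tb :: "'i \<Rightarrow> 'x \<Rightarrow> 'v \<Rightarrow> real"
  assumes P: "prob_space P" and Q: "prob_space Q" and I: "finite I" "j \<in> I"
    and T: "\<And>k. k \<in> I \<Longrightarrow> T k \<in> borel_measurable P"
    and Tb: "\<And>k. k \<in> I \<Longrightarrow> (\<lambda>(x, v). Tb k x v) \<in> borel_measurable (P \<Otimes>\<^sub>M Q)"
    and A: "A \<in> sets P" "measure P A < \<epsilon> / 8"
    and close: "\<And>x. x \<in> space P \<Longrightarrow> x \<notin> A \<Longrightarrow>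
      \<bar>SUP y. \<bar>measure Q {v \<in> space Q. \<forall>k\<in>I. Tb k x v \<le> y k}
              - measure P {x' \<in> space P. \<forall>k\<in>I. T k x' \<le> y k}\<bar>\<bar> \<le> \<epsilon> / 8"
    and lower: "\<epsilon> / 4 < measure P {x \<in> space P. \<forall>k\<in>I. T k x \<le> y k}"
    and upper: "measure P {x \<in> space P. T j x \<le> y j} < 3 * \<epsilon> / 4"
    and m: "1 \<le> m" and exp: "exp (- real m * \<epsilon>\<^sup>2 / 128) \<le> \<epsilon> / 8" and \<epsilon>: "0 < \<epsilon>" "\<epsilon> \<le> 1"
  shows "measure (P \<Otimes>\<^sub>M PiM {1..m} (\<lambda>_. Q))
      {(x, vs) \<in> space (P \<Otimes>\<^sub>M PiM {1..m} (\<lambda>_. Q)). 1 - \<epsilon> / 16 < boot_pval m (\<lambda>k. Tb j x (vs k)) (T j x)}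
    \<le> \<epsilon>"
proof -
  interpret P: prob_space P by fact
  define B where "B = A \<union> {x \<in> space P. T j x \<le> y j}"
  define e where "e = (1 - \<epsilon> / 16) * (real m + 1) - 1/2 - real m * (1 - \<epsilon> / 8)"
  have Tj: "{x \<in> space P. T j x \<le> y j} \<in> sets P"
    by (intro borel_measurable_le T[OF I(2)] borel_measurable_const)
  have B: "B \<in> sets P"
    unfolding B_def using A(1) Tj by (rule sets.Un)
  have "measure P B \<le> measure P A + measure P {x \<in> space P. T j x \<le> y j}"
    unfolding B_def using A(1) Tj by (rule measure_Un_le)
  have tail: "measure Q {v \<in> space Q. T j x \<le> Tb j x v} \<le> 1 - \<epsilon> / 8" if "x \<in> space P" "x \<notin> B" for x
  proof -
    from that have x: "x \<notin> A" "y j < T j x"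
      unfolding B_def by auto
    have "measure Q {v \<in> space Q. T j x \<le> Tb j x v} \<le> 1 - measure P {x \<in> space P. \<forall>k\<in>I. T k x \<le> y k} + \<epsilon> / 8"
      by (rule bootstrap_tail_le_of_cdf_close[where Tb = "\<lambda>k. Tb k x" and T = T and y = y, OF Q P I _ close[OF that(1) x(1)] x(2)])
        (use measurable_Pair2[OF Tb that(1)] in simp)
    then show ?thesis
      using lower by linarith
  qed
  have e: "real m * \<epsilon> / 16 \<le> e"
    using \<epsilon> unfolding e_def by (simp add: field_simps)
  moreover have "0 \<le> real m * \<epsilon> / 16"
    using \<epsilon> by simp
  ultimately have "0 \<le> e" "(real m * \<epsilon> / 16)\<^sup>2 \<le> e\<^sup>2"
    by (auto intro: power_mono)
  then have "2 * (real m * \<epsilon> / 16)\<^sup>2 / real m \<le> 2 * e\<^sup>2 / real m"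
    by (intro divide_right_mono) auto
  also have "2 * (real m * \<epsilon> / 16)\<^sup>2 / real m = real m * \<epsilon>\<^sup>2 / 128"
    using m by (simp add: power2_eq_square)
  finally have "exp (- 2 * e\<^sup>2 / real m) \<le> exp (- real m * \<epsilon>\<^sup>2 / 128)"
    by simp
  with \<open>0 \<le> e\<close> show ?thesis
    using measure_boot_pval_gt_Hoeffding[OF P Q T[OF I(2)] Tb[OF I(2)] B m _ tail, of "1 - \<epsilon> / 16"]
      \<open>measure P B \<le> _\<close> A(2) upper exp unfolding e_def by linarith
qed

lemma eventually_exp_neg_le:
  assumes M: "filterlim Mn at_top sequentially" and c: "0 < c" and \<eta>: "0 < \<eta>"
  shows "eventually (\<lambda>n. 1 \<le> Mn n \<and> exp (- real (Mn n) * c) \<le> \<eta>) sequentially"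
proof -
  have Mr: "filterlim (\<lambda>n. real (Mn n)) at_top sequentially"
    by (rule filterlim_compose[OF filterlim_real_sequentially M])
  have "filterlim (\<lambda>n. - real (Mn n) * c) at_bot sequentially"
    using filterlim_tendsto_pos_mult_at_top[OF tendsto_const c Mr]
    by (simp add: filterlim_uminus_at_top mult.commute)
  then have "((\<lambda>n. exp (- real (Mn n) * c)) \<longlongrightarrow> 0) sequentially"
    by (rule filterlim_compose[OF exp_at_bot])
  then have "eventually (\<lambda>n. exp (- real (Mn n) * c) < \<eta>) sequentially"
    using \<eta> by (rule order_tendstoD(2))
  moreover have "eventually (\<lambda>n. 1 \<le> Mn n) sequentially"
    using M by (simp add: filterlim_at_top)
  ultimately show ?thesis
    by eventually_elim simp
qed

lemma boot_pval_null_eventually_bounded: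
  fixes I :: "nat set" and T :: "nat \<Rightarrow> nat \<Rightarrow> 'x \<Rightarrow> real" and Tb :: "nat \<Rightarrow> nat \<Rightarrow> 'x \<Rightarrow> 'v \<Rightarrow> real"
  assumes P: "\<And>n. prob_space (P n)" and Q: "\<And>n. prob_space (Q n)" and I: "finite I" "j \<in> I"
    and T: "\<And>n k. k \<in> I \<Longrightarrow> T n k \<in> borel_measurable (P n)"
    and Tb: "\<And>n k. k \<in> I \<Longrightarrow> (\<lambda>(x, v). Tb n k x v) \<in> borel_measurable (P n \<Otimes>\<^sub>M Q n)"
    and M: "filterlim Mn at_top sequentially"
    and L: "prob_space L" "sets L = sets (PiM I (\<lambda>_. borel))"
    and L_cont: "continuous_on UNIV (\<lambda>y. measure L {z \<in> space L. \<forall>k\<in>I. z k \<le> y k})"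
    and weak: "weak_conv_vec (\<lambda>n. distr (P n) (PiM I (\<lambda>_. borel)) (\<lambda>x. restrict (\<lambda>k. T n k x) I)) L"
    and boot: "tends_to_zero_in_prob P (\<lambda>n x. SUP y. \<bar>measure (Q n) {v \<in> space (Q n). \<forall>k\<in>I. Tb n k x v \<le> y k}
        - measure (P n) {x' \<in> space (P n). \<forall>k\<in>I. T n k x' \<le> y k}\<bar>)" (is "tends_to_zero_in_prob P ?D")
    and \<epsilon>: "0 < \<epsilon>" "\<epsilon> \<le> 1"
  shows "\<exists>a\<in>{0<..<1}. eventually (\<lambda>n. measure (P n \<Otimes>\<^sub>M PiM {1..Mn n} (\<lambda>_. Q n))
      {(x, vs) \<in> space (P n \<Otimes>\<^sub>M PiM {1..Mn n} (\<lambda>_. Q n)). a < boot_pval (Mn n) (\<lambda>k. Tb n j x (vs k)) (T n j x)}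
    \<le> \<epsilon>) sequentially"
proof -
  obtain y h where h: "0 < h" and lower: "\<epsilon> / 4 < measure L {z \<in> space L. \<forall>k\<in>I. z k \<le> y k}"
    and upper: "measure L {z \<in> space L. z j \<le> y j + h} < 3 * \<epsilon> / 4"
    using continuous_orthant_cdf_margin[OF L I L_cont \<epsilon>] by blast
  have X: "(\<lambda>x. restrict (\<lambda>k. T n k x) I) \<in> measurable (P n) (PiM I (\<lambda>_. borel))" for n
    using T by (rule measurable_restrict)
  obtain A where A: "\<forall>n. A n \<in> sets (P n) \<and> {x \<in> space (P n). \<epsilon> / 8 < \<bar>?D n x\<bar>} \<subseteq> A n"
    and A_lim: "(\<lambda>n. measure (P n) (A n)) \<longlonglongrightarrow> 0"
    using boot[unfolded tends_to_zero_in_prob_def, rule_format, of "\<epsilon> / 8"] \<epsilon> by auto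
  have "eventually (\<lambda>n. \<epsilon> / 4 < measure (P n) {x \<in> space (P n). \<forall>k\<in>I. T n k x \<le> y k + h / 2}) sequentially"
    using weak_conv_vec_orthant_lower[OF weak L P X I(1) order.refl _ lower] h by simp
  moreover have "eventually (\<lambda>n. measure (P n) {x \<in> space (P n). T n j x \<le> y j + h / 2} < 3 * \<epsilon> / 4) sequentially"
    using weak_conv_vec_orthant_upper[OF weak L P X _ _ _, of "{j}" "h / 2" "\<lambda>k. y k + h / 2" "3 * \<epsilon> / 4"]
      upper h I by (simp add: ac_simps)
  moreover have "eventually (\<lambda>n. measure (P n) (A n) < \<epsilon> / 8) sequentially"
    using A_lim \<epsilon> by (intro order_tendstoD(2)) auto
  moreover have "eventually (\<lambda>n. 1 \<le> Mn n \<and> exp (- real (Mn n) * (\<epsilon>\<^sup>2 / 128)) \<le> \<epsilon> / 8) sequentially"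
    using \<epsilon> by (intro eventually_exp_neg_le[OF M]) auto
  ultimately have "eventually (\<lambda>n. measure (P n \<Otimes>\<^sub>M PiM {1..Mn n} (\<lambda>_. Q n))
      {(x, vs) \<in> space (P n \<Otimes>\<^sub>M PiM {1..Mn n} (\<lambda>_. Q n)). 1 - \<epsilon> / 16 < boot_pval (Mn n) (\<lambda>k. Tb n j x (vs k)) (T n j x)}
    \<le> \<epsilon>) sequentially"
  proof eventually_elim
    case (elim n)
    have "\<bar>?D n x\<bar> \<le> \<epsilon> / 8" if "x \<in> space (P n)" "x \<notin> A n" for x
    proof (rule ccontr)
      assume "\<not> \<bar>?D n x\<bar> \<le> \<epsilon> / 8"
      with that(1) have "x \<in> {x \<in> space (P n). \<epsilon> / 8 < \<bar>?D n x\<bar>}"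
        by (simp only: mem_Collect_eq not_le simp_thms)
      with A that(2) show False
        by blast
    qed
    with elim show ?case
      using A by (intro measure_boot_pval_null_le[OF P Q I T Tb, where y = "\<lambda>k. y k + h / 2"]) (auto simp: \<epsilon>)
  qed
  moreover have "1 - \<epsilon> / 16 \<in> {0<..<1}"
    using \<epsilon> by auto
  ultimately show ?thesis
    by blast
qed

section \<open>Combining the p-values\<close>

lemma borel_measurable_antimono_on_comp:
  fixes \<phi> :: "real \<Rightarrow> real"
  assumes \<phi>: "\<And>x y. x \<in> A \<Longrightarrow> y \<in> A \<Longrightarrow> x \<le> y \<Longrightarrow> \<phi> y \<le> \<phi> x"
    and f: "f \<in> borel_measurable M" "\<And>z. z \<in> space M \<Longrightarrow> f z \<in> A"
  shows "(\<lambda>z. \<phi> (f z)) \<in> borel_measurable M"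
proof -
  have "mono_on A (\<lambda>t. - \<phi> t)"
    using \<phi> by (auto intro: mono_onI)
  then have "(\<lambda>t. - \<phi> t) \<in> borel_measurable (restrict_space borel A)"
    by (rule borel_measurable_mono_on_fnc)
  moreover have "f \<in> measurable M (restrict_space borel A)"
    using f by (intro measurable_restrict_space2) auto
  ultimately have "(\<lambda>z. - \<phi> (f z)) \<in> borel_measurable M"
    by (rule measurable_compose[rotated])
  then show ?thesis
    by (rule borel_measurable_uminus_eq[THEN iffD1])
qed

lemma measure_weighted_sum_gt_ge:
  fixes \<phi> :: "real \<Rightarrow> real" and p :: "'i \<Rightarrow> 'a \<Rightarrow> real"
  assumes M: "prob_space M" and J: "finite J" and w: "\<And>j. j \<in> J \<Longrightarrow> 0 \<le> w j"
    and \<phi>: "\<And>x y. x \<in> {0<..<1} \<Longrightarrow> y \<in> {0<..<1} \<Longrightarrow> x \<le> y \<Longrightarrow> \<phi> y \<le> \<phi> x"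
    and p: "\<And>j. j \<in> J \<Longrightarrow> p j \<in> borel_measurable M" "\<And>j z. j \<in> J \<Longrightarrow> z \<in> space M \<Longrightarrow> p j z \<in> {0<..<1}"
    and c: "\<And>j. j \<in> J \<Longrightarrow> c j \<in> {0<..<1}" and K: "K < (\<Sum>j\<in>J. w j * \<phi> (c j))"
  shows "1 - (\<Sum>j\<in>J. measure M {z \<in> space M. c j < p j z})
    \<le> measure M {z \<in> space M. K < (\<Sum>j\<in>J. w j * \<phi> (p j z))}"
proof -
  interpret prob_space M by fact
  let ?W = "{z \<in> space M. K < (\<Sum>j\<in>J. w j * \<phi> (p j z))}"
  have "(\<lambda>z. \<phi> (p j z)) \<in> borel_measurable M" if "j \<in> J" for j
    using p(2) that by (intro borel_measurable_antimono_on_comp[OF \<phi> p(1)[OF that]])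
  then have W: "?W \<in> sets M"
    by (intro borel_measurable_less borel_measurable_const borel_measurable_sum borel_measurable_times)
  have bad: "{z \<in> space M. c j < p j z} \<in> sets M" if "j \<in> J" for j
    using p(1)[OF that] by measurable
  have "space M - ?W \<subseteq> (\<Union>j\<in>J. {z \<in> space M. c j < p j z})"
  proof
    fix z assume z: "z \<in> space M - ?W"
    show "z \<in> (\<Union>j\<in>J. {z \<in> space M. c j < p j z})"
    proof (rule ccontr)
      assume "z \<notin> (\<Union>j\<in>J. {z \<in> space M. c j < p j z})"
      then have "\<phi> (c j) \<le> \<phi> (p j z)" if "j \<in> J" for j
        using z that \<phi>[OF p(2) c] by (auto simp: not_less)
      then have "(\<Sum>j\<in>J. w j * \<phi> (c j)) \<le> (\<Sum>j\<in>J. w j * \<phi> (p j z))"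
        by (intro sum_mono mult_left_mono w)
      with K z show False
        by auto
    qed
  qed
  then have "measure M (space M - ?W) \<le> measure M (\<Union>j\<in>J. {z \<in> space M. c j < p j z})"
    using bad J by (intro finite_measure_mono) auto
  also have "\<dots> \<le> (\<Sum>j\<in>J. measure M {z \<in> space M. c j < p j z})"
    using bad J by (intro finite_measure_subadditive_finite) auto
  finally show ?thesis
    using prob_compl[OF W] by linarith
qed

lemma tendsto_one_of_eventually_ge:
  fixes f :: "nat \<Rightarrow> real"
  assumes le: "\<And>n. f n \<le> 1" and ge: "\<And>\<epsilon>. 0 < \<epsilon> \<Longrightarrow> \<epsilon> \<le> 1 \<Longrightarrow> eventually (\<lambda>n. 1 - \<epsilon> \<le> f n) sequentially"
  shows "f \<longlonglongrightarrow> 1"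
proof (rule order_tendstoI)
  fix a :: real assume "a < 1"
  then have "eventually (\<lambda>n. 1 - min ((1 - a) / 2) 1 \<le> f n) sequentially"
    by (intro ge) auto
  then show "eventually (\<lambda>n. a < f n) sequentially"
    by (rule eventually_mono) (use \<open>a < 1\<close> in \<open>auto simp: min_def field_simps split: if_splits\<close>)
next
  fix a :: real assume "1 < a"
  then show "eventually (\<lambda>n. f n < a) sequentially"
    using le by (intro always_eventually) (meson le_less_trans)
qed

lemma exists_threshold_weighted_sum_gt:
  fixes \<phi> :: "real \<Rightarrow> real"
  assumes J: "finite J" "N \<subseteq> J" "J - N \<noteq> {}" and w: "\<And>j. j \<in> J \<Longrightarrow> 0 < w j"
    and \<phi>_surj: "\<phi> ` {0<..<1} = UNIV"
  shows "\<exists>\<beta>\<in>{0<..<1}. K < (\<Sum>j\<in>J. w j * \<phi> (if j \<in> N then a j else \<beta>))"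
proof -
  define W where "W = (\<Sum>j\<in>J - N. w j)"
  have W: "0 < W"
    unfolding W_def using J w by (intro sum_pos) auto
  have "(K - (\<Sum>j\<in>N. w j * \<phi> (a j))) / W + 1 \<in> \<phi> ` {0<..<1}"
    using \<phi>_surj by simp
  then obtain \<beta> where \<beta>: "(K - (\<Sum>j\<in>N. w j * \<phi> (a j))) / W + 1 = \<phi> \<beta>" "\<beta> \<in> {0<..<1}"
    by (rule imageE)
  let ?c = "\<lambda>j. if j \<in> N then a j else \<beta>"
  have "(\<Sum>j\<in>J. w j * \<phi> (?c j)) = (\<Sum>j\<in>N. w j * \<phi> (?c j)) + (\<Sum>j\<in>J - N. w j * \<phi> (?c j))"
    using sum.subset_diff[OF J(2,1), of "\<lambda>j. w j * \<phi> (?c j)"] by linarith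
  also have "\<dots> = (\<Sum>j\<in>N. w j * \<phi> (a j)) + W * \<phi> \<beta>"
    unfolding W_def sum_distrib_right by (intro arg_cong2[where f = "(+)"] sum.cong) auto
  also have "\<dots> = K + W"
    using W by (simp add: \<beta>(1)[symmetric] field_simps)
  finally show ?thesis
    using W \<beta>(2) by (intro bexI[of _ \<beta>]) auto
qed

lemma exists_thresholds_eventually:
  fixes \<mu> :: "nat \<Rightarrow> 'a measure" and p :: "nat \<Rightarrow> 'i \<Rightarrow> 'a \<Rightarrow> real" and \<phi> :: "real \<Rightarrow> real"
  assumes J: "finite J" "N \<subseteq> J" "J - N \<noteq> {}"
    and w: "\<And>j. j \<in> J \<Longrightarrow> 0 < w j"
    and \<phi>_surj: "\<phi> ` {0<..<1} = UNIV"
    and null: "\<And>j \<epsilon>. j \<in> N \<Longrightarrow> 0 < \<epsilon> \<Longrightarrow> \<epsilon> \<le> 1 \<Longrightarrow>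
      \<exists>a\<in>{0<..<1}. eventually (\<lambda>n. measure (\<mu> n) {z \<in> space (\<mu> n). a < p n j z} \<le> \<epsilon>) sequentially"
    and alt: "\<And>j \<beta>. j \<in> J - N \<Longrightarrow> 0 < \<beta> \<Longrightarrow>
      (\<lambda>n. measure (\<mu> n) {z \<in> space (\<mu> n). \<beta> < p n j z}) \<longlonglongrightarrow> 0"
    and \<epsilon>: "0 < \<epsilon>" "\<epsilon> \<le> 1"
  shows "\<exists>c. (\<forall>j\<in>J. c j \<in> {0<..<1}) \<and> K < (\<Sum>j\<in>J. w j * \<phi> (c j))
    \<and> eventually (\<lambda>n. \<forall>j\<in>J. measure (\<mu> n) {z \<in> space (\<mu> n). c j < p n j z} \<le> \<epsilon>) sequentially"
proof -
  have "\<forall>j\<in>N. \<exists>a. a \<in> {0<..<1} \<and> eventually (\<lambda>n. measure (\<mu> n) {z \<in> space (\<mu> n). a < p n j z} \<le> \<epsilon>) sequentially"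
    using null[OF _ \<epsilon>] by blast
  from bchoice[OF this] obtain a where a: "\<And>j. j \<in> N \<Longrightarrow> a j \<in> {0<..<1}"
    "\<And>j. j \<in> N \<Longrightarrow> eventually (\<lambda>n. measure (\<mu> n) {z \<in> space (\<mu> n). a j < p n j z} \<le> \<epsilon>) sequentially"
    by blast
  obtain \<beta> where \<beta>: "\<beta> \<in> {0<..<1}" and K: "K < (\<Sum>j\<in>J. w j * \<phi> (if j \<in> N then a j else \<beta>))"
    using exists_threshold_weighted_sum_gt[where a = a and K = K, OF J _ \<phi>_surj] w by blast
  have "eventually (\<lambda>n. measure (\<mu> n) {z \<in> space (\<mu> n). (if j \<in> N then a j else \<beta>) < p n j z} \<le> \<epsilon>) sequentially"
    if "j \<in> J" for j
  proof (cases "j \<in> N")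
    case True
    then show ?thesis
      using a(2) by simp
  next
    case False
    with that \<beta> have "eventually (\<lambda>n. measure (\<mu> n) {z \<in> space (\<mu> n). \<beta> < p n j z} < \<epsilon>) sequentially"
      by (intro order_tendstoD(2)[OF alt \<epsilon>(1)]) auto
    then show ?thesis
      using False by (simp add: eventually_mono)
  qed
  then show ?thesis
    using a(1) \<beta> K
    by (intro exI[of _ "\<lambda>j. if j \<in> N then a j else \<beta>"] conjI eventually_ball_finite[OF J(1)]) auto
qed

lemma weighted_pvalue_sum_tendsto_one:
  fixes \<mu> :: "nat \<Rightarrow> 'a measure" and p :: "nat \<Rightarrow> 'i \<Rightarrow> 'a \<Rightarrow> real" and \<phi> :: "real \<Rightarrow> real"
  assumes \<mu>: "\<And>n. prob_space (\<mu> n)"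
    and \<phi>: "\<And>x y. x \<in> {0<..<1} \<Longrightarrow> y \<in> {0<..<1} \<Longrightarrow> x \<le> y \<Longrightarrow> \<phi> y \<le> \<phi> x"
    and p: "\<And>n j. j \<in> J \<Longrightarrow> p n j \<in> borel_measurable (\<mu> n)"
      "\<And>n j z. j \<in> J \<Longrightarrow> z \<in> space (\<mu> n) \<Longrightarrow> p n j z \<in> {0<..<1}"
    and J: "finite J" "N \<subseteq> J" "J - N \<noteq> {}"
    and w: "\<And>j. j \<in> J \<Longrightarrow> 0 < w j"
    and \<phi>_surj: "\<phi> ` {0<..<1} = UNIV"
    and null: "\<And>j \<epsilon>. j \<in> N \<Longrightarrow> 0 < \<epsilon> \<Longrightarrow> \<epsilon> \<le> 1 \<Longrightarrow>
      \<exists>a\<in>{0<..<1}. eventually (\<lambda>n. measure (\<mu> n) {z \<in> space (\<mu> n). a < p n j z} \<le> \<epsilon>) sequentially"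
    and alt: "\<And>j \<beta>. j \<in> J - N \<Longrightarrow> 0 < \<beta> \<Longrightarrow>
      (\<lambda>n. measure (\<mu> n) {z \<in> space (\<mu> n). \<beta> < p n j z}) \<longlonglongrightarrow> 0"
  shows "(\<lambda>n. measure (\<mu> n) {z \<in> space (\<mu> n). K < (\<Sum>j\<in>J. w j * \<phi> (p n j z))}) \<longlonglongrightarrow> 1"
proof (rule tendsto_one_of_eventually_ge)
  show "measure (\<mu> n) {z \<in> space (\<mu> n). K < (\<Sum>j\<in>J. w j * \<phi> (p n j z))} \<le> 1" for n
    using prob_space.prob_le_1[OF \<mu>] by simp
  fix \<epsilon> :: real assume \<epsilon>: "0 < \<epsilon>" "\<epsilon> \<le> 1"
  have card: "0 < card J"
    using J by (auto simp: card_gt_0_iff)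
  then have "0 < \<epsilon> / card J" "\<epsilon> / card J \<le> 1"
    using \<epsilon> by (auto simp: field_simps intro: order.trans[of _ 1])
  then obtain c where c: "\<And>j. j \<in> J \<Longrightarrow> c j \<in> {0<..<1}" and K: "K < (\<Sum>j\<in>J. w j * \<phi> (c j))"
    and ev: "eventually (\<lambda>n. \<forall>j\<in>J. measure (\<mu> n) {z \<in> space (\<mu> n). c j < p n j z} \<le> \<epsilon> / card J) sequentially"
    using exists_thresholds_eventually[where \<mu> = \<mu> and p = p and w = w and \<phi> = \<phi> and K = K,
        OF J w \<phi>_surj null alt] by blast
  show "eventually (\<lambda>n. 1 - \<epsilon> \<le> measure (\<mu> n) {z \<in> space (\<mu> n). K < (\<Sum>j\<in>J. w j * \<phi> (p n j z))}) sequentially"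
    using ev
  proof (rule eventually_mono)
    fix n assume bad: "\<forall>j\<in>J. measure (\<mu> n) {z \<in> space (\<mu> n). c j < p n j z} \<le> \<epsilon> / card J"
    have "(\<Sum>j\<in>J. measure (\<mu> n) {z \<in> space (\<mu> n). c j < p n j z}) \<le> (\<Sum>j\<in>J. \<epsilon> / card J)"
      using bad by (intro sum_mono) auto
    also have "\<dots> = \<epsilon>"
      using card by simp
    moreover have "1 - (\<Sum>j\<in>J. measure (\<mu> n) {z \<in> space (\<mu> n). c j < p n j z})
        \<le> measure (\<mu> n) {z \<in> space (\<mu> n). K < (\<Sum>j\<in>J. w j * \<phi> (p n j z))}"
      using w by (intro measure_weighted_sum_gt_ge[where p = "p n", OF \<mu> J(1) _ \<phi> p c K]) (auto intro: less_imp_le)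
    ultimately show "1 - \<epsilon> \<le> measure (\<mu> n) {z \<in> space (\<mu> n). K < (\<Sum>j\<in>J. w j * \<phi> (p n j z))}"
      by linarith
  qed
qed

theorem mainTheorem9:
  fixes r r0 :: nat
    and P :: "nat \<Rightarrow> 'x measure"        \<comment> \<open>distribution of the data X_n\<close>
    and Q :: "nat \<Rightarrow> 'v measure"        \<comment> \<open>distribution of the resampling randomness V_n^[i]\<close>
    and Tstat :: "nat \<Rightarrow> nat \<Rightarrow> 'x \<Rightarrow> real"   \<comment> \<open>T_{n,j} = Tstat n j X_n\<close>
    and Tb :: "nat \<Rightarrow> nat \<Rightarrow> 'x \<Rightarrow> 'v \<Rightarrow> real" \<comment> \<open>T_{n,j}^[i] = Tb n j X_n V_n^[i]\<close>
    and H0 :: "nat \<Rightarrow> bool"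
    and Mn :: "nat \<Rightarrow> nat"
    and psi :: "(nat \<Rightarrow> real) \<Rightarrow> real"
    and w :: "nat \<Rightarrow> real"
    and \<phi> :: "real \<Rightarrow> real"
    and L :: "(nat \<Rightarrow> real) measure"
  assumes P_prob: "\<And>n. prob_space (P n)"
    and Q_prob: "\<And>n. prob_space (Q n)"
    and T_meas: "\<And>n j. j \<in> {1..r} \<Longrightarrow> Tstat n j \<in> borel_measurable (P n)"
    and Tb_meas: "\<And>n j. j \<in> {1..r} \<Longrightarrow> (\<lambda>(x, v). Tb n j x v) \<in> borel_measurable (P n \<Otimes>\<^sub>M Q n)"
    and M_lim: "filterlim Mn at_top sequentially"
    and psi_def: "\<And>p. psi p = (\<Sum>j\<in>{1..r}. w j * \<phi> (p j))"
    and w_pos: "\<And>j. j \<in> {1..r} \<Longrightarrow> w j > 0"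
    and phi_decr: "\<And>x y. x \<in> {0<..<1} \<Longrightarrow> y \<in> {0<..<1} \<Longrightarrow> x \<le> y \<Longrightarrow> \<phi> y \<le> \<phi> x"
    and phi_nonneg: "\<And>p. p \<in> {0<..<1/2} \<Longrightarrow> \<phi> p \<ge> 0"
    and phi_bij: "bij_betw \<phi> {0<..<1} (UNIV :: real set)"
    and r0_range: "r0 \<in> {1..r - 1}"
    and H0_true: "\<And>j. j \<in> {1..r0} \<Longrightarrow> H0 j"
    and L_prob: "prob_space L"
    and L_sets: "sets L = sets (PiM {1..r0} (\<lambda>_. borel))"
    and L_cont_cdf: "continuous_on UNIV
          (\<lambda>y :: nat \<Rightarrow> real. measure L {z \<in> space L. \<forall>j\<in>{1..r0}. z j \<le> y j})"
    and weak: "weak_conv_vec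
          (\<lambda>n. distr (P n) (PiM {1..r0} (\<lambda>_. borel)) (\<lambda>x. restrict (\<lambda>j. Tstat n j x) {1..r0})) L"
    and boot_unif: "tends_to_zero_in_prob P
          (\<lambda>n x. (SUP y :: nat \<Rightarrow> real.
              \<bar>measure (Q n) {v \<in> space (Q n). \<forall>j\<in>{1..r0}. Tb n j x v \<le> y j}
               - measure (P n) {x' \<in> space (P n). \<forall>j\<in>{1..r0}. Tstat n j x' \<le> y j}\<bar>))"
    and H0_false: "\<And>j. j \<in> {r0+1..r} \<Longrightarrow> \<not> H0 j"
    and alt: "\<And>j. j \<in> {r0+1..r} \<Longrightarrow>
          (\<lambda>n. measure (P n \<Otimes>\<^sub>M Q n) {(x, v) \<in> space (P n \<Otimes>\<^sub>M Q n). Tb n j x v \<ge> Tstat n j x})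
            \<longlonglongrightarrow> 0"
  shows "\<forall>K :: real.
     (\<lambda>n. measure (P n \<Otimes>\<^sub>M PiM {1..Mn n} (\<lambda>_. Q n))
        {(x, vs) \<in> space (P n \<Otimes>\<^sub>M PiM {1..Mn n} (\<lambda>_. Q n)).
           psi (\<lambda>j. boot_pval (Mn n) (\<lambda>k. Tb n j x (vs k)) (Tstat n j x)) > K})
     \<longlonglongrightarrow> 1"
proof
  \<comment> \<open>\<open>H0_true\<close> and \<open>H0_false\<close> are unused, since \<open>H0\<close> only labels tests whose behaviour is
    fully described by (ii)(a) and (ii)(b); \<open>phi_nonneg\<close> is unused, as only monotonicity and
    surjectivity of \<open>\<phi>\<close> enter.\<close>
  fix K :: real
  let ?\<mu> = "\<lambda>n. P n \<Otimes>\<^sub>M PiM {1..Mn n} (\<lambda>_. Q n)"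
  define p where "p n j = (\<lambda>(x, vs). boot_pval (Mn n) (\<lambda>k. Tb n j x (vs k)) (Tstat n j x))" for n j
  have p_set: "{(x, vs) \<in> space (?\<mu> n). c < boot_pval (Mn n) (\<lambda>k. Tb n j x (vs k)) (Tstat n j x)}
      = {z \<in> space (?\<mu> n). c < p n j z}" for n j c
    by (auto simp: p_def)
  have r0: "{1..r0} \<subseteq> {1..r}" "{1..r} - {1..r0} = {r0+1..r}" "{1..r} - {1..r0} \<noteq> {}"
    using r0_range by auto
  have "(\<lambda>n. measure (?\<mu> n) {z \<in> space (?\<mu> n). K < (\<Sum>j\<in>{1..r}. w j * \<phi> (p n j z))}) \<longlonglongrightarrow> 1"
  proof (rule weighted_pvalue_sum_tendsto_one[OF _ phi_decr _ _ finite_atLeastAtMost r0(1,3) w_pos])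
    show "prob_space (?\<mu> n)" for n
      using P_prob Q_prob by (intro prob_space_pair prob_space_PiM)
    show "\<phi> ` {0<..<1} = UNIV"
      using phi_bij by (simp add: bij_betw_def)
    show "p n j \<in> borel_measurable (?\<mu> n)" if "j \<in> {1..r}" for n j
      unfolding p_def using that by (intro borel_measurable_boot_pval T_meas Tb_meas)
    show "p n j z \<in> {0<..<1}" for n j z
      unfolding p_def case_prod_beta by (rule boot_pval_in_unit_interval)
    show "\<exists>a\<in>{0<..<1}. eventually (\<lambda>n. measure (?\<mu> n) {z \<in> space (?\<mu> n). a < p n j z} \<le> \<epsilon>) sequentially"
      if "j \<in> {1..r0}" "0 < \<epsilon>" "\<epsilon> \<le> 1" for j \<epsilon>
      unfolding p_set[symmetric] using r0(1) that
      by (intro boot_pval_null_eventually_bounded[OF P_prob Q_prob _ _ _ _ M_lim L_prob L_sets L_cont_cdf weak boot_unif])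
        (auto intro: T_meas Tb_meas)
    show "(\<lambda>n. measure (?\<mu> n) {z \<in> space (?\<mu> n). \<beta> < p n j z}) \<longlonglongrightarrow> 0"
      if "j \<in> {1..r} - {1..r0}" "0 < \<beta>" for j \<beta>
      unfolding p_set[symmetric] using that r0(2)
      by (intro boot_pval_alternative_tendsto_zero[OF P_prob Q_prob T_meas Tb_meas M_lim alt]) auto
  qed simp
  moreover have "{(x, vs) \<in> space (?\<mu> n). psi (\<lambda>j. boot_pval (Mn n) (\<lambda>k. Tb n j x (vs k)) (Tstat n j x)) > K}
      = {z \<in> space (?\<mu> n). K < (\<Sum>j\<in>{1..r}. w j * \<phi> (p n j z))}" for n
    by (auto simp: psi_def p_def)
  ultimately show "(\<lambda>n. measure (?\<mu> n) {(x, vs) \<in> space (?\<mu> n).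
      psi (\<lambda>j. boot_pval (Mn n) (\<lambda>k. Tb n j x (vs k)) (Tstat n j x)) > K}) \<longlonglongrightarrow> 1"
    by simp
qed

end
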